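(* Suppose $r\neq0$ and $r+s=0$. Then the Leonard pair $L,L^*+\frac{r-d}{2}$ on $\mathcal P_d(\mathbb R)$ is dual almost bipartite.
   Context: Fix an integer $d\ge0$ and $r,s\in(-1,\infty)$. Write $(x)_i=x(x+1)\cdots(x+i-1)$, $(x)_0=1$. For $0\le i\le d$ put $\theta_i=(d-i)(d-i+r+s+1)$ (distinct) and $\theta^*_i=i$. Put $b^*_i=\frac{(d-i)(i-d-s)(2d-2i+r+s+2)_i}{(2d-2i+r+s)_{i+1}}$ ($0\le i\le d-1$), $c^*_i=\frac{i(i-d-r-1)(d-i+r+s+1)_{d-i}}{(d-i+r+s+2)_{d-i+1}}$ ($1\le i\le d$), $b^*_d=c^*_0=0$, and $a^*_i=\theta^*_0-b^*_i-c^*_i$. Let $\mathcal P_d(\mathbb R)$ be the real polynomials of degree at most $d$, each determined by its values at $\theta_0,\dots,\theta_d$. Let $L,L^*$ be the linear maps on $\mathcal P_d(\mathbb R)$ with $(Lf)(\theta_i)=\theta_i f(\theta_i)$ and $(L^*f)(\theta_i)=b^*_i f(\theta_{i+1})+a^*_i f(\theta_i)+c^*_i f(\theta_{i-1})$ ($0\le i\le d$; terms with coefficient $b^*_d$ or $c^*_0$ omitted); a scalar stands for that scalar times the identity. A square matrix is irreducible tridiagonal if its nonzero entries lie on the diagonal, subdiagonal or superdiagonal and all subdiagonal and superdiagonal entries are nonzero. A Leonard pair on a nonzero finite-dimensional vector space $V$ is an ordered pair $A,A^*$ of linear maps on $V$ such that there is an ordered basis in which $A$ is diagonal and $A^*$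 is irreducible tridiagonal, and there is an ordered basis in which $A^*$ is diagonal and $A$ is irreducible tridiagonal. A Leonard pair $A,A^*$ on $V$ is almost bipartite if there is an ordered basis of $V$ in which $A^*$ is diagonal and $A$ is irreducible tridiagonal with all diagonal entries except the last one equal to zero; it is dual almost bipartite if $A^*,A$ is almost bipartite, i.e. there is an ordered basis in which $A$ is diagonal and $A^*$ is irreducible tridiagonal with all diagonal entries except the last one equal to zero. *)

theory Defs
  imports "HOL-Computational_Algebra.Polynomial"
begin

definition lin_space :: "real poly set \<Rightarrow> bool" where
  "lin_space V \<longleftrightarrow> 0 \<in> V \<and> (\<forall>x\<in>V. \<forall>y\<in>V. x + y \<in> V) \<and> (\<forall>c. \<forall>x\<in>V. smult c x \<in> V)"

definition lin_map_on :: "real poly set \<Rightarrow> (real poly \<Rightarrow> real poly) \<Rightarrow> bool" where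
  "lin_map_on V A \<longleftrightarrow> (\<forall>x\<in>V. A x \<in> V) \<and> (\<forall>x\<in>V. \<forall>y\<in>V. A (x + y) = A x + A y)
     \<and> (\<forall>c. \<forall>x\<in>V. A (smult c x) = smult c (A x))"

definition ordered_basis :: "real poly set \<Rightarrow> nat \<Rightarrow> (nat \<Rightarrow> real poly) \<Rightarrow> bool" where
  "ordered_basis V n b \<longleftrightarrow> (\<forall>i<n. b i \<in> V)
     \<and> (\<forall>c. (\<Sum>i<n. smult (c i) (b i)) = 0 \<longrightarrow> (\<forall>i<n. c i = 0))
     \<and> (\<forall>v\<in>V. \<exists>c. v = (\<Sum>i<n. smult (c i) (b i)))"

definition matrix_in_basis :: "nat \<Rightarrow> (nat \<Rightarrow> real poly) \<Rightarrow> (real poly \<Rightarrow> real poly) \<Rightarrow> (nat \<Rightarrow> nat \<Rightarrow> real) \<Rightarrow> bool" where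
  "matrix_in_basis n b A M \<longleftrightarrow> (\<forall>j<n. A (b j) = (\<Sum>i<n. smult (M i j) (b i)))"

definition is_diagonal :: "nat \<Rightarrow> (nat \<Rightarrow> nat \<Rightarrow> real) \<Rightarrow> bool" where
  "is_diagonal n M \<longleftrightarrow> (\<forall>i<n. \<forall>j<n. i \<noteq> j \<longrightarrow> M i j = 0)"

definition irred_tridiagonal :: "nat \<Rightarrow> (nat \<Rightarrow> nat \<Rightarrow> real) \<Rightarrow> bool" where
  "irred_tridiagonal n M \<longleftrightarrow> (\<forall>i<n. \<forall>j<n. (j + 1 < i \<or> i + 1 < j) \<longrightarrow> M i j = 0)
     \<and> (\<forall>i. i + 1 < n \<longrightarrow> M (i + 1) i \<noteq> 0 \<and> M i (i + 1) \<noteq> 0)"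

definition leonard_pair :: "real poly set \<Rightarrow> (real poly \<Rightarrow> real poly) \<Rightarrow> (real poly \<Rightarrow> real poly) \<Rightarrow> bool" where
  "leonard_pair V A As \<longleftrightarrow> lin_space V \<and> V \<noteq> {0} \<and> lin_map_on V A \<and> lin_map_on V As
     \<and> (\<exists>n b M Ms. ordered_basis V n b \<and> matrix_in_basis n b A M \<and> matrix_in_basis n b As Ms
          \<and> is_diagonal n M \<and> irred_tridiagonal n Ms)
     \<and> (\<exists>n b M Ms. ordered_basis V n b \<and> matrix_in_basis n b A M \<and> matrix_in_basis n b As Ms
          \<and> is_diagonal n Ms \<and> irred_tridiagonal n M)"

definition almost_bipartite :: "real poly set \<Rightarrow> (real poly \<Rightarrow> real poly) \<Rightarrow> (real poly \<Rightarrow> real poly) \<Rightarrow> bool" where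
  "almost_bipartite V A As \<longleftrightarrow> leonard_pair V A As
     \<and> (\<exists>n b M Ms. ordered_basis V n b \<and> matrix_in_basis n b A M \<and> matrix_in_basis n b As Ms
          \<and> is_diagonal n Ms \<and> irred_tridiagonal n M \<and> (\<forall>i. i + 1 < n \<longrightarrow> M i i = 0))"

definition dual_almost_bipartite :: "real poly set \<Rightarrow> (real poly \<Rightarrow> real poly) \<Rightarrow> (real poly \<Rightarrow> real poly) \<Rightarrow> bool" where
  "dual_almost_bipartite V A As \<longleftrightarrow> almost_bipartite V As A"

definition Pd :: "nat \<Rightarrow> real poly set" where
  "Pd d = {p. degree p \<le> d}"

definition theta :: "nat \<Rightarrow> real \<Rightarrow> real \<Rightarrow> nat \<Rightarrow> real" where
  "theta d r s i = real (d - i) * (real (d - i) + r + s + 1)"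

definition thetas :: "nat \<Rightarrow> real" where
  "thetas i = real i"

definition bs :: "nat \<Rightarrow> real \<Rightarrow> real \<Rightarrow> nat \<Rightarrow> real" where
  "bs d r s i = (if i < d then
      real (d - i) * (real i - real d - s) * pochhammer (2 * real d - 2 * real i + r + s + 2) i
        / pochhammer (2 * real d - 2 * real i + r + s) (i + 1)
    else 0)"

definition cs :: "nat \<Rightarrow> real \<Rightarrow> real \<Rightarrow> nat \<Rightarrow> real" where
  "cs d r s i = (if 1 \<le> i \<and> i \<le> d then
      real i * (real i - real d - r - 1) * pochhammer (real d - real i + r + s + 1) (d - i)
        / pochhammer (real d - real i + r + s + 2) (d - i + 1)
    else 0)"

definition as :: "nat \<Rightarrow> real \<Rightarrow> real \<Rightarrow> nat \<Rightarrow> real" where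
  "as d r s i = thetas 0 - bs d r s i - cs d r s i"

definition opL :: "nat \<Rightarrow> real \<Rightarrow> real \<Rightarrow> real poly \<Rightarrow> real poly" where
  "opL d r s f = (THE g. degree g \<le> d \<and>
     (\<forall>i\<le>d. poly g (theta d r s i) = theta d r s i * poly f (theta d r s i)))"

definition opLs :: "nat \<Rightarrow> real \<Rightarrow> real \<Rightarrow> real poly \<Rightarrow> real poly" where
  "opLs d r s f = (THE g. degree g \<le> d \<and>
     (\<forall>i\<le>d. poly g (theta d r s i) =
        (if i < d then bs d r s i * poly f (theta d r s (i + 1)) else 0)
        + as d r s i * poly f (theta d r s i)
        + (if 0 < i then cs d r s i * poly f (theta d r s (i - 1)) else 0)))"

end

(*
  With r + s = 0 the nodes are theta_i = y (y + 1) for y = d - i, the coefficients b*_i, c*_i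
  become rational functions of y, and a*_i = (d - r)/2 for i < d.  So in the Lagrange basis of
  the nodes, where L is diagonal, the shifted L* is irreducible tridiagonal (b*_i, c*_i < 0) with
  zero diagonal except for the last entry r (d + 1)/2.

  For the other basis, L* maps tau_k = prod_(j<k) (x - j (j + 1)) to k tau_k plus a multiple of
  tau_(k-1), so it has a monic eigenpolynomial p_n of each degree n <= d, with eigenvalue n.
  L* is symmetric for the discrete inner product whose positive weights satisfy
  w_i b*_i = w_(i+1) c*_(i+1), so the p_n are orthogonal.  L acts as multiplication by x below
  degree d and is symmetric as well, so its matrix in the basis p_n is irreducible tridiagonal:
  this is the three-term recurrence of orthogonal polynomials.
*)

theory Submission
  imports Defs
begin

section \<open>Triangular operators on polynomials\<close>

(* Unlike degree p < m, this also covers p = 0 and makes sense for m = 0. *)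
definition deg_below :: "nat \<Rightarrow> 'a::zero poly \<Rightarrow> bool" where
  "deg_below m p \<longleftrightarrow> (\<forall>k\<ge>m. coeff p k = 0)"

lemma deg_below_add: "deg_below m p \<Longrightarrow> deg_below m q \<Longrightarrow> deg_below m (p + q)"
  by (simp add: deg_below_def)

lemma deg_below_diff:
  fixes p q :: "'a::ab_group_add poly"
  shows "deg_below m p \<Longrightarrow> deg_below m q \<Longrightarrow> deg_below m (p - q)"
  by (simp add: deg_below_def)

lemma deg_below_smult: "deg_below m p \<Longrightarrow> deg_below m (smult c p)"
  by (simp add: deg_below_def)

lemma deg_below_mono: "deg_below m p \<Longrightarrow> m \<le> n \<Longrightarrow> deg_below n p"
  by (simp add: deg_below_def)

lemma deg_below_0_iff: "deg_below 0 p \<longleftrightarrow> p = 0"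
  by (auto simp: deg_below_def poly_eq_iff)

lemma deg_below_Suc_iff: "deg_below (Suc m) p \<longleftrightarrow> degree p \<le> m"
  by (auto simp: deg_below_def intro: degree_le coeff_eq_0)

lemma deg_below_SucD: "deg_below (Suc m) p \<Longrightarrow> coeff p m = 0 \<Longrightarrow> deg_below m p"
  unfolding deg_below_def by (metis Suc_le_eq le_neq_implies_less)

locale triangular_operator =
  fixes d :: nat and T :: "real poly \<Rightarrow> real poly"
    and t :: "nat \<Rightarrow> real poly" and ev :: "nat \<Rightarrow> real"
  assumes add: "T (f + g) = T f + T g"
    and smult: "T (smult c f) = smult c (T f)"
    and degree_t: "degree (t k) = k"
    and coeff_t: "coeff (t k) k = 1"
    and triangular: "k \<le> d \<Longrightarrow> deg_below k (T (t k) - smult (ev k) (t k))"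
    and ev_inj: "inj_on ev {..d}"
begin

lemma zero: "T 0 = 0"
  using smult[of 0 0] by simp

lemma solvable:
  assumes "m \<le> n" "n \<le> d" "deg_below m f"
  shows "\<exists>g. deg_below m g \<and> T g - smult (ev n) g = f"
  using assms
proof (induction m arbitrary: f)
  case 0
  then show ?case by (auto simp: deg_below_0_iff zero)
next
  case (Suc m)
  have "ev m \<noteq> ev n"
    using Suc.prems ev_inj by (auto dest: inj_onD)
  define a where "a = coeff f m / (ev m - ev n)"
  define q where "q = T (smult a (t m)) - smult (ev n) (smult a (t m))"
  have q_eq: "q = smult a (T (t m) - smult (ev m) (t m)) + smult ((ev m - ev n) * a) (t m)"
    by (simp add: q_def smult poly_eq_iff algebra_simps)
  have t_below: "deg_below (Suc m) (t m)"
    by (simp add: deg_below_Suc_iff degree_t)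
  have top: "deg_below m (T (t m) - smult (ev m) (t m))"
    using Suc.prems by (intro triangular) auto
  have "coeff (T (t m) - smult (ev m) (t m)) m = 0"
    using top unfolding deg_below_def by blast
  then have "coeff q m = coeff f m"
    using \<open>ev m \<noteq> ev n\<close> by (simp only: q_eq coeff_add coeff_smult coeff_t a_def) simp
  moreover have "deg_below (Suc m) q"
    unfolding q_eq
    by (intro deg_below_add[OF deg_below_smult[OF deg_below_mono[OF top]] deg_below_smult[OF t_below]]) simp
  ultimately have "deg_below m (f - q)"
    using Suc.prems by (intro deg_below_SucD[OF deg_below_diff]) auto
  then obtain g where g: "deg_below m g" "T g - smult (ev n) g = f - q"
    using Suc.IH Suc.prems by (metis Suc_leD)
  have "T (smult a (t m) + g) - smult (ev n) (smult a (t m) + g) = f"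
    using g(2) by (simp add: add q_def poly_eq_iff algebra_simps)
  moreover have "deg_below (Suc m) (smult a (t m) + g)"
    by (intro deg_below_add[OF deg_below_smult[OF t_below] deg_below_mono[OF g(1)]]) simp
  ultimately show ?case by blast
qed

lemma monic_eigenvector:
  assumes "n \<le> d"
  shows "\<exists>p. degree p = n \<and> coeff p n = 1 \<and> T p = smult (ev n) p"
proof -
  obtain g where g: "deg_below n g" "T g - smult (ev n) g = T (t n) - smult (ev n) (t n)"
    using solvable[OF order_refl assms triangular[OF assms]] by blast
  have "T (t n - g) = smult (ev n) (t n - g)"
    using g(2) add[of "t n - g" g] by (simp add: poly_eq_iff algebra_simps)
  moreover have "coeff (t n - g) n = 1"
    using g(1) by (simp add: coeff_t deg_below_def)
  moreover have "degree (t n - g) \<le> n"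
    using g(1) by (intro degree_diff_le) (auto simp: degree_t deg_below_def intro: degree_le)
  ultimately show ?thesis
    by (metis le_antisym le_degree zero_neq_one)
qed

end

section \<open>Interpolation at distinct nodes\<close>

lemma lin_space_Pd: "lin_space (Pd d)"
  unfolding lin_space_def Pd_def
  by (auto intro: order.trans[OF degree_add_le] order.trans[OF degree_smult_le])

lemma Pd_neq_zero: "Pd d \<noteq> {0}"
proof -
  have "1 \<in> Pd d" by (simp add: Pd_def)
  then show ?thesis by auto
qed

definition jacobi_matrix ::
    "(nat \<Rightarrow> real) \<Rightarrow> (nat \<Rightarrow> real) \<Rightarrow> (nat \<Rightarrow> real) \<Rightarrow> nat \<Rightarrow> nat \<Rightarrow> real" where
  "jacobi_matrix b a c i j =
    (if j = i then a i else if j = i + 1 then b i else if i = j + 1 then c i else 0)"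

lemma is_diagonal_if_eq: "is_diagonal n (\<lambda>i j. if i = j then f j else 0)"
  by (simp add: is_diagonal_def)

lemma irred_tridiagonal_jacobi_matrix:
  assumes "\<And>i. i + 1 < n \<Longrightarrow> b i \<noteq> 0" "\<And>i. i + 1 < n \<Longrightarrow> c (i + 1) \<noteq> 0"
  shows "irred_tridiagonal n (jacobi_matrix b a c)"
  using assms by (auto simp: irred_tridiagonal_def jacobi_matrix_def)

locale interpolation_nodes =
  fixes d :: nat and x :: "nat \<Rightarrow> real"
  assumes inj_x: "inj_on x {..d}"
begin

lemma poly_eq_on_nodes:
  assumes "degree p \<le> d" "degree q \<le> d" "\<And>i. i \<le> d \<Longrightarrow> poly p (x i) = poly q (x i)"
  shows "p = q"
proof (rule poly_eqI_degree)
  have "card (x ` {..d}) = Suc d"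
    using inj_x by (simp add: card_image)
  then show "degree p < card (x ` {..d})" "degree q < card (x ` {..d})"
    using assms(1,2) by auto
qed (use assms(3) in auto)

definition lagrange :: "nat \<Rightarrow> real poly" where
  "lagrange j = smult (1 / (\<Prod>k\<in>{..d} - {j}. x j - x k)) (\<Prod>k\<in>{..d} - {j}. [:- x k, 1:])"

lemma degree_lagrange:
  assumes "j \<le> d"
  shows "degree (lagrange j) \<le> d"
proof -
  have "degree (\<Prod>k\<in>{..d} - {j}. [:- x k, 1:]) \<le> (\<Sum>k\<in>{..d} - {j}. degree [:- x k, 1:])"
    by (rule degree_prod_sum_le[simplified o_def]) simp
  also have "\<dots> = d"
    using assms by simp
  finally show ?thesis
    unfolding lagrange_def by simp
qed

lemma poly_lagrange:
  assumes "i \<le> d" "j \<le> d"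
  shows "poly (lagrange j) (x i) = (if i = j then 1 else 0)"
proof -
  have "(\<Prod>k\<in>{..d} - {j}. x j - x k) \<noteq> 0"
    using inj_x assms(2) by (auto simp: inj_on_def)
  moreover have "i \<noteq> j \<Longrightarrow> (\<Prod>k\<in>{..d} - {j}. x i - x k) = 0"
    using assms(1) by (subst prod_zero_iff) auto
  ultimately show ?thesis
    by (simp add: lagrange_def poly_prod)
qed

definition interp :: "(nat \<Rightarrow> real) \<Rightarrow> real poly" where
  "interp v = (\<Sum>j\<le>d. smult (v j) (lagrange j))"

lemma degree_interp: "degree (interp v) \<le> d"
  unfolding interp_def
  by (rule degree_sum_le) (auto intro: order.trans[OF degree_smult_le] degree_lagrange)

lemma poly_interp:
  assumes "i \<le> d"
  shows "poly (interp v) (x i) = v i"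
proof -
  have "poly (interp v) (x i) = (\<Sum>j\<le>d. if j = i then v j else 0)"
    unfolding interp_def poly_sum using assms by (intro sum.cong) (auto simp: poly_lagrange)
  also have "\<dots> = v i"
    using assms by simp
  finally show ?thesis .
qed

lemma interp_unique:
  "degree p \<le> d \<Longrightarrow> (\<And>i. i \<le> d \<Longrightarrow> poly p (x i) = v i) \<Longrightarrow> p = interp v"
  by (rule poly_eq_on_nodes) (simp_all add: degree_interp poly_interp)

lemma the_interp: "(THE g. degree g \<le> d \<and> (\<forall>i\<le>d. poly g (x i) = v i)) = interp v"
  by (rule the_equality) (auto simp: degree_interp poly_interp intro: interp_unique)

lemma interp_add: "interp (\<lambda>i. u i + v i) = interp u + interp v"
  by (rule interp_unique[symmetric]) (simp_all add: degree_add_le degree_interp poly_interp)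

lemma interp_smult: "interp (\<lambda>i. c * v i) = smult c (interp v)"
  by (rule interp_unique[symmetric])
     (simp_all add: order.trans[OF degree_smult_le] degree_interp poly_interp)

lemma lagrange_basis: "ordered_basis (Pd d) (Suc d) lagrange"
  unfolding ordered_basis_def
proof (intro conjI allI impI ballI)
  show "lagrange i \<in> Pd d" if "i < Suc d" for i
    using that by (simp add: Pd_def degree_lagrange)
next
  fix c :: "nat \<Rightarrow> real" and k
  assume "(\<Sum>i<Suc d. smult (c i) (lagrange i)) = 0" and "k < Suc d"
  then have "poly (interp c) (x k) = 0"
    by (simp add: interp_def lessThan_Suc_atMost)
  then show "c k = 0"
    using \<open>k < Suc d\<close> by (simp add: poly_interp)
next
  fix p assume "p \<in> Pd d"
  then have "p = interp (\<lambda>i. poly p (x i))"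
    by (intro interp_unique) (simp_all add: Pd_def)
  then show "\<exists>c. p = (\<Sum>i<Suc d. smult (c i) (lagrange i))"
    by (auto simp: interp_def lessThan_Suc_atMost)
qed

lemma matrix_in_lagrange_basis:
  assumes "\<And>j. j \<le> d \<Longrightarrow> degree (A (lagrange j)) \<le> d"
    and "\<And>i j. i \<le> d \<Longrightarrow> j \<le> d \<Longrightarrow> poly (A (lagrange j)) (x i) = M i j"
  shows "matrix_in_basis (Suc d) lagrange A M"
  unfolding matrix_in_basis_def
proof (intro allI impI)
  fix j assume "j < Suc d"
  then have "A (lagrange j) = interp (\<lambda>i. M i j)"
    using assms by (intro interp_unique) auto
  then show "A (lagrange j) = (\<Sum>i<Suc d. smult (M i j) (lagrange i))"
    by (simp add: interp_def lessThan_Suc_atMost)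
qed

definition mult_nodes :: "real poly \<Rightarrow> real poly" where
  "mult_nodes f = interp (\<lambda>i. x i * poly f (x i))"

lemma degree_mult_nodes: "degree (mult_nodes f) \<le> d"
  by (simp add: mult_nodes_def degree_interp)

lemma poly_mult_nodes: "i \<le> d \<Longrightarrow> poly (mult_nodes f) (x i) = x i * poly f (x i)"
  by (simp add: mult_nodes_def poly_interp)

lemma mult_nodes_eq:
  assumes "degree f < d"
  shows "mult_nodes f = [:0, 1:] * f"
proof -
  have "degree ([:0, 1:] * f) \<le> d"
    using assms degree_mult_le[of "[:0, 1:]" f] by simp
  then show ?thesis
    unfolding mult_nodes_def by (intro interp_unique[symmetric]) simp_all
qed

lemma lin_map_on_mult_nodes: "lin_map_on (Pd d) mult_nodes"
  unfolding lin_map_on_def mult_nodes_def Pd_def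
  by (simp add: degree_interp interp_add[symmetric] interp_smult[symmetric] algebra_simps)

definition tridiag_value ::
    "(nat \<Rightarrow> real) \<Rightarrow> (nat \<Rightarrow> real) \<Rightarrow> (nat \<Rightarrow> real) \<Rightarrow> real poly \<Rightarrow> nat \<Rightarrow> real" where "tridiag_value b a c f i =
    (if i < d then b i * poly f (x (i + 1)) else 0) + a i * poly f (x i)
      + (if 0 < i then c i * poly f (x (i - 1)) else 0)"

lemma tridiag_value_add:
  "tridiag_value b a c (f + g) = (\<lambda>i. tridiag_value b a c f i + tridiag_value b a c g i)"
  by (simp add: fun_eq_iff tridiag_value_def algebra_simps)

lemma tridiag_value_smult: "tridiag_value b a c (smult k f) = (\<lambda>i. k * tridiag_value b a c f i)"
  by (simp add: fun_eq_iff tridiag_value_def algebra_simps)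

lemma tridiag_value_lagrange:
  assumes "i \<le> d" "j \<le> d"
  shows "tridiag_value b a c (lagrange j) i = jacobi_matrix b a c i j"
  using assms by (auto simp: tridiag_value_def jacobi_matrix_def poly_lagrange)

end

locale weighted_nodes = interpolation_nodes +
  fixes w :: "nat \<Rightarrow> real"
  assumes w_pos: "i \<le> d \<Longrightarrow> 0 < w i"
begin

definition ip :: "real poly \<Rightarrow> real poly \<Rightarrow> real" where
  "ip f g = (\<Sum>i\<le>d. w i * poly f (x i) * poly g (x i))"

lemma ip_commute: "ip f g = ip g f"
  unfolding ip_def by (simp add: ac_simps)

lemma ip_add_left: "ip (f + g) h = ip f h + ip g h"
  unfolding ip_def by (simp add: algebra_simps sum.distrib)

lemma ip_smult_left: "ip (smult c f) g = c * ip f g"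
  unfolding ip_def by (simp add: algebra_simps sum_distrib_left)

lemma ip_zero_left: "ip 0 g = 0"
  by (simp add: ip_def)

lemma ip_sum_left: "ip (\<Sum>i\<in>A. smult (c i) (f i)) g = (\<Sum>i\<in>A. c i * ip (f i) g)"
  by (induction A rule: infinite_finite_induct) (simp_all add: ip_zero_left ip_add_left ip_smult_left)

lemma ip_self_pos:
  assumes "degree f \<le> d" "f \<noteq> 0"
  shows "0 < ip f f"
proof -
  obtain i where i: "i \<le> d" "poly f (x i) \<noteq> 0"
    using poly_eq_on_nodes[of f 0] assms by auto
  show ?thesis
    unfolding ip_def
  proof (rule sum_pos2)
    have "0 < poly f (x i) * poly f (x i)"
      using i(2) by (auto simp: zero_less_mult_iff linorder_neq_iff)
    then show "0 < w i * poly f (x i) * poly f (x i)"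
      using i(1) w_pos by (simp add: mult.assoc)
    show "0 \<le> w j * poly f (x j) * poly f (x j)" if "j \<in> {..d}" for j
      using that w_pos by (simp add: mult.assoc less_imp_le)
  qed (use i in auto)
qed

lemma ip_mult_nodes_commute: "ip (mult_nodes f) g = ip f (mult_nodes g)"
  unfolding ip_def by (intro sum.cong) (simp_all add: poly_mult_nodes)

(* Detailed balance turns the two off-diagonal sums into one symmetric sum. *)
lemma ip_tridiag_commute:
  assumes balance: "\<And>i. i < d \<Longrightarrow> w i * b i = w (Suc i) * c (Suc i)"
    and A: "\<And>f i. i \<le> d \<Longrightarrow> poly (A f) (x i) = tridiag_value b a c f i"
  shows "ip (A f) g = ip f (A g)"
proof -
  have expand: "ip (A f) g = (\<Sum>i\<le>d. w i * a i * poly f (x i) * poly g (x i))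
      + (\<Sum>i<d. w i * b i * (poly f (x (Suc i)) * poly g (x i) + poly f (x i) * poly g (x (Suc i))))"
    for f g
  proof -
    let ?up = "\<lambda>i. w i * b i * poly f (x (Suc i)) * poly g (x i)"
    let ?down = "\<lambda>i. if 0 < i then w i * c i * poly f (x (i - 1)) * poly g (x i) else 0"
    have "ip (A f) g = (\<Sum>i\<le>d. if i < d then ?up i else 0)
        + (\<Sum>i\<le>d. w i * a i * poly f (x i) * poly g (x i)) + (\<Sum>i\<le>d. ?down i)"
      unfolding ip_def sum.distrib[symmetric]
      by (intro sum.cong) (simp_all add: A tridiag_value_def algebra_simps)
    moreover have "(\<Sum>i\<le>d. if i < d then ?up i else 0) = (\<Sum>i<d. ?up i)"
      by (simp add: lessThan_Suc_atMost[symmetric])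
    moreover have "(\<Sum>i\<le>d. ?down i) = (\<Sum>i<d. w (Suc i) * c (Suc i) * poly f (x i) * poly g (x (Suc i)))"
      unfolding lessThan_Suc_atMost[symmetric] by (subst sum.lessThan_Suc_shift) simp
    moreover have "\<dots> = (\<Sum>i<d. w i * b i * poly f (x i) * poly g (x (Suc i)))"
      by (intro sum.cong) (simp_all add: balance)
    ultimately show ?thesis
      by (simp add: sum.distrib algebra_simps)
  qed
  show ?thesis
    using expand[of f g] expand[of g f] ip_commute[of f "A g"] by (simp add: ac_simps)
qed

end

section \<open>Orthogonal eigenpolynomials\<close>

locale selfadjoint_eigenbasis = weighted_nodes +
  fixes A :: "real poly \<Rightarrow> real poly" and ev :: "nat \<Rightarrow> real"
  assumes A_commute: "ip (A f) g = ip f (A g)"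
    and ev_inj: "inj_on ev {..d}"
    and monic_eigenvector: "n \<le> d \<Longrightarrow> \<exists>p. degree p = n \<and> coeff p n = 1 \<and> A p = smult (ev n) p"
begin

definition eigenpoly :: "nat \<Rightarrow> real poly" where
  "eigenpoly n = (SOME p. degree p = n \<and> coeff p n = 1 \<and> A p = smult (ev n) p)"

lemma
  assumes "n \<le> d"
  shows degree_eigenpoly: "degree (eigenpoly n) = n"
    and coeff_eigenpoly: "coeff (eigenpoly n) n = 1"
    and A_eigenpoly: "A (eigenpoly n) = smult (ev n) (eigenpoly n)"
  using someI_ex[OF monic_eigenvector[OF assms]] by (simp_all add: eigenpoly_def)

lemma ip_eigenpoly_self_pos: "n \<le> d \<Longrightarrow> 0 < ip (eigenpoly n) (eigenpoly n)"
  by (rule ip_self_pos) (auto simp: degree_eigenpoly dest: coeff_eigenpoly)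

lemma ip_eigenpoly_orthogonal:
  assumes "n \<le> d" "m \<le> d" "n \<noteq> m"
  shows "ip (eigenpoly n) (eigenpoly m) = 0"
proof -
  have "ev n * ip (eigenpoly n) (eigenpoly m) = ip (A (eigenpoly n)) (eigenpoly m)"
    using assms by (simp add: A_eigenpoly ip_smult_left)
  also have "\<dots> = ip (eigenpoly n) (A (eigenpoly m))"
    by (rule A_commute)
  also have "\<dots> = ev m * ip (eigenpoly n) (eigenpoly m)"
    using assms by (simp add: A_eigenpoly ip_commute[of "eigenpoly n"] ip_smult_left)
  finally show ?thesis
    using assms ev_inj by (auto dest: inj_onD)
qed

lemma eigenpoly_span:
  "m \<le> d \<Longrightarrow> degree f \<le> m \<Longrightarrow> \<exists>c. f = (\<Sum>i\<le>m. smult (c i) (eigenpoly i))"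
proof (induction m arbitrary: f)
  case 0
  have "eigenpoly 0 = 1"
    using degree_eigenpoly[of 0] coeff_eigenpoly[of 0] by (auto elim: degree_eq_zeroE)
  then have "f = smult (coeff f 0) (eigenpoly 0)"
    using 0 by (auto elim: degree_eq_zeroE)
  then show ?case by auto
next
  case (Suc m)
  define h where "h = f - smult (coeff f (Suc m)) (eigenpoly (Suc m))"
  have "deg_below (Suc (Suc m)) h"
    unfolding h_def using Suc.prems
    by (intro deg_below_diff deg_below_smult) (simp_all add: deg_below_Suc_iff degree_eigenpoly)
  moreover have "coeff h (Suc m) = 0"
    using Suc.prems by (simp add: h_def coeff_eigenpoly)
  ultimately have "degree h \<le> m"
    by (simp add: deg_below_SucD flip: deg_below_Suc_iff)
  then obtain c where c: "h = (\<Sum>i\<le>m. smult (c i) (eigenpoly i))"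
    using Suc by auto
  have "f = (\<Sum>i\<le>Suc m. smult ((c(Suc m := coeff f (Suc m))) i) (eigenpoly i))"
    by (simp add: c[symmetric] h_def)
  then show ?case by blast
qed

lemma ip_eigenpoly_expansion:
  assumes "k \<le> d"
  shows "ip (\<Sum>i\<le>d. smult (c i) (eigenpoly i)) (eigenpoly k) = c k * ip (eigenpoly k) (eigenpoly k)"
proof -
  have "ip (\<Sum>i\<le>d. smult (c i) (eigenpoly i)) (eigenpoly k)
      = (\<Sum>i\<le>d. if i = k then c k * ip (eigenpoly k) (eigenpoly k) else 0)"
    unfolding ip_sum_left using assms by (intro sum.cong) (auto simp: ip_eigenpoly_orthogonal)
  also have "\<dots> = c k * ip (eigenpoly k) (eigenpoly k)"
    using assms by simp
  finally show ?thesis .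
qed

lemma ip_eigenpoly_deg_below:
  assumes "n \<le> d" "deg_below n f"
  shows "ip f (eigenpoly n) = 0"
proof (cases n)
  case 0
  then show ?thesis
    using assms(2) by (simp add: deg_below_0_iff ip_def)
next
  case (Suc m)
  then obtain c where "f = (\<Sum>i\<le>m. smult (c i) (eigenpoly i))"
    using assms eigenpoly_span[of m f] by (auto simp: deg_below_Suc_iff)
  then have "ip f (eigenpoly n) = (\<Sum>i\<le>m. c i * ip (eigenpoly i) (eigenpoly n))"
    by (simp add: ip_sum_left)
  also have "\<dots> = 0"
    using assms Suc by (intro sum.neutral) (auto simp: ip_eigenpoly_orthogonal)
  finally show ?thesis .
qed

lemma eigenpoly_basis: "ordered_basis (Pd d) (Suc d) eigenpoly"
  unfolding ordered_basis_def
proof (intro conjI allI impI ballI)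
  show "eigenpoly i \<in> Pd d" if "i < Suc d" for i
    using that by (simp add: Pd_def degree_eigenpoly)
next
  fix c :: "nat \<Rightarrow> real" and k
  assume "(\<Sum>i<Suc d. smult (c i) (eigenpoly i)) = 0" and "k < Suc d"
  then have "c k * ip (eigenpoly k) (eigenpoly k) = 0"
    using ip_eigenpoly_expansion[of k c] by (simp add: lessThan_Suc_atMost ip_zero_left)
  then show "c k = 0"
    using ip_eigenpoly_self_pos[of k] \<open>k < Suc d\<close> by simp
next
  fix p assume "p \<in> Pd d"
  then show "\<exists>c. p = (\<Sum>i<Suc d. smult (c i) (eigenpoly i))"
    using eigenpoly_span[of d p] by (simp add: Pd_def lessThan_Suc_atMost)
qed

lemma matrix_in_eigenbasis:
  assumes "\<And>j. j \<le> d \<Longrightarrow> degree (B (eigenpoly j)) \<le> d"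
  shows "matrix_in_basis (Suc d) eigenpoly B
    (\<lambda>i j. ip (B (eigenpoly j)) (eigenpoly i) / ip (eigenpoly i) (eigenpoly i))"
  unfolding matrix_in_basis_def lessThan_Suc_atMost
proof (intro allI impI)
  fix j assume "j < Suc d"
  then obtain c where c: "B (eigenpoly j) = (\<Sum>i\<le>d. smult (c i) (eigenpoly i))"
    using assms[of j] eigenpoly_span[of d "B (eigenpoly j)"] by auto
  have "ip (B (eigenpoly j)) (eigenpoly i) / ip (eigenpoly i) (eigenpoly i) = c i" if "i \<le> d" for i
  proof -
    have "ip (B (eigenpoly j)) (eigenpoly i) = c i * ip (eigenpoly i) (eigenpoly i)"
      unfolding c using that by (rule ip_eigenpoly_expansion)
    then show ?thesis
      using that ip_eigenpoly_self_pos[of i] by simp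
  qed
  then have "(\<Sum>i\<le>d. smult (ip (B (eigenpoly j)) (eigenpoly i) / ip (eigenpoly i) (eigenpoly i)) (eigenpoly i))
      = (\<Sum>i\<le>d. smult (c i) (eigenpoly i))"
    by (intro sum.cong) simp_all
  then show "B (eigenpoly j) = (\<Sum>i\<le>d. smult
      (ip (B (eigenpoly j)) (eigenpoly i) / ip (eigenpoly i) (eigenpoly i)) (eigenpoly i))"
    by (rule trans[OF c sym])
qed

lemma matrix_A_eigenbasis:
  "matrix_in_basis (Suc d) eigenpoly A (\<lambda>i j. if i = j then ev j else 0)"
  unfolding matrix_in_basis_def
proof (intro allI impI)
  fix j assume "j < Suc d"
  then have "A (eigenpoly j) = smult (ev j) (eigenpoly j)"
    by (simp add: A_eigenpoly)
  also have "\<dots> = (\<Sum>i<Suc d. if i = j then smult (ev j) (eigenpoly j) else 0)"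
    using \<open>j < Suc d\<close> by simp
  also have "\<dots> = (\<Sum>i<Suc d. smult (if i = j then ev j else 0) (eigenpoly i))"
    by (rule sum.cong) auto
  finally show "A (eigenpoly j) = (\<Sum>i<Suc d. smult (if i = j then ev j else 0) (eigenpoly i))" .
qed

lemma ip_mult_nodes_eigenpoly_far:
  assumes "i \<le> d" "j + 1 < i"
  shows "ip (mult_nodes (eigenpoly j)) (eigenpoly i) = 0"
proof -
  have "mult_nodes (eigenpoly j) = [:0, 1:] * eigenpoly j"
    using assms by (intro mult_nodes_eq) (simp add: degree_eigenpoly)
  moreover have "deg_below (Suc (Suc j)) ([:0, 1:] * eigenpoly j)"
    unfolding deg_below_Suc_iff using assms degree_mult_le[of "[:0, 1:]" "eigenpoly j"]
    by (simp add: degree_eigenpoly)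
  moreover have "Suc (Suc j) \<le> i"
    using assms by simp
  ultimately have "deg_below i (mult_nodes (eigenpoly j))"
    by (metis deg_below_mono)
  then show ?thesis
    using assms by (intro ip_eigenpoly_deg_below) simp_all
qed

lemma ip_mult_nodes_eigenpoly_next:
  assumes "i < d"
  shows "ip (mult_nodes (eigenpoly i)) (eigenpoly (Suc i)) = ip (eigenpoly (Suc i)) (eigenpoly (Suc i))"
proof -
  define h where "h = [:0, 1:] * eigenpoly i - eigenpoly (Suc i)"
  have "degree ([:0, 1:] * eigenpoly i) \<le> Suc i"
    using assms degree_mult_le[of "[:0, 1:]" "eigenpoly i"] by (simp add: degree_eigenpoly)
  then have "deg_below (Suc (Suc i)) h"
    unfolding h_def using assms
    by (intro deg_below_diff) (simp_all add: deg_below_Suc_iff degree_eigenpoly)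
  moreover have "coeff h (Suc i) = 0"
    using assms by (simp add: h_def coeff_eigenpoly)
  ultimately have "deg_below (Suc i) h"
    by (rule deg_below_SucD)
  then have "ip h (eigenpoly (Suc i)) = 0"
    using assms by (intro ip_eigenpoly_deg_below) simp_all
  moreover have "mult_nodes (eigenpoly i) = eigenpoly (Suc i) + h"
    using assms by (simp add: h_def mult_nodes_eq degree_eigenpoly)
  ultimately show ?thesis
    by (simp add: ip_add_left)
qed

(* The three-term recurrence: x p_j has degree j + 1, and multiplication by x is symmetric. *)
lemma irred_tridiagonal_mult_nodes_eigenbasis:
  "irred_tridiagonal (Suc d)
    (\<lambda>i j. ip (mult_nodes (eigenpoly j)) (eigenpoly i) / ip (eigenpoly i) (eigenpoly i))"
  unfolding irred_tridiagonal_def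
proof (intro conjI allI impI)
  fix i j assume "i < Suc d" "j < Suc d" "j + 1 < i \<or> i + 1 < j"
  then have "ip (mult_nodes (eigenpoly j)) (eigenpoly i) = 0"
  proof (elim disjE)
    assume "i + 1 < j"
    have "ip (mult_nodes (eigenpoly j)) (eigenpoly i) = ip (mult_nodes (eigenpoly i)) (eigenpoly j)"
      by (rule trans[OF ip_mult_nodes_commute ip_commute])
    also have "\<dots> = 0"
      using \<open>i + 1 < j\<close> \<open>j < Suc d\<close> by (simp add: ip_mult_nodes_eigenpoly_far)
    finally show ?thesis .
  qed (simp add: ip_mult_nodes_eigenpoly_far)
  then show "ip (mult_nodes (eigenpoly j)) (eigenpoly i) / ip (eigenpoly i) (eigenpoly i) = 0"
    by simp
next
  fix i assume "i + 1 < Suc d"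
  then have "i < d" by simp
  have swap: "ip (mult_nodes (eigenpoly (Suc i))) (eigenpoly i)
      = ip (mult_nodes (eigenpoly i)) (eigenpoly (Suc i))"
    by (rule trans[OF ip_mult_nodes_commute ip_commute])
  show "ip (mult_nodes (eigenpoly i)) (eigenpoly (i + 1)) / ip (eigenpoly (i + 1)) (eigenpoly (i + 1)) \<noteq> 0"
       "ip (mult_nodes (eigenpoly (i + 1))) (eigenpoly i) / ip (eigenpoly i) (eigenpoly i) \<noteq> 0"
    using \<open>i < d\<close> ip_eigenpoly_self_pos[of i] ip_eigenpoly_self_pos[of "Suc i"]
    by (simp_all add: swap ip_mult_nodes_eigenpoly_next)
qed

end

section \<open>The dual Hahn data for r + s = 0\<close>

lemma pochhammer_add2_div_Suc:
  fixes a :: real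
  assumes "0 < a"
  shows "pochhammer (a + 2) n / pochhammer a (Suc n) = (a + real n + 1) / (a * (a + 1))"
proof -
  have "pochhammer a (Suc n) * (a + real n + 1) = pochhammer a (Suc (Suc n))"
    by (simp add: pochhammer_Suc add.assoc)
  also have "\<dots> = a * (a + 1) * pochhammer (a + 2) n"
    by (simp add: pochhammer_rec add.assoc mult.assoc)
  finally have "pochhammer (a + 2) n * (a * (a + 1)) = (a + real n + 1) * pochhammer a (Suc n)"
    by (simp only: ac_simps)
  moreover have "pochhammer a (Suc n) \<noteq> 0" "a * (a + 1) \<noteq> 0"
    using assms pochhammer_pos[of a "Suc n"] by auto
  ultimately show ?thesis
    by (simp add: frac_eq_eq)
qed

lemma pochhammer_div_add1_Suc:
  fixes b :: real
  assumes "0 < b"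
  shows "pochhammer b n / pochhammer (b + 1) (Suc n) = b / ((b + real n) * (b + real n + 1))"
proof -
  have "b * pochhammer (b + 1) (Suc n) = pochhammer b (Suc (Suc n))"
    by (rule pochhammer_rec[symmetric])
  also have "\<dots> = pochhammer b n * ((b + real n) * (b + real n + 1))"
    by (simp add: pochhammer_Suc algebra_simps)
  finally have "pochhammer b n * ((b + real n) * (b + real n + 1)) = b * pochhammer (b + 1) (Suc n)"
    by simp
  moreover have "pochhammer (b + 1) (Suc n) \<noteq> 0" "(b + real n) * (b + real n + 1) \<noteq> 0"
    using assms pochhammer_pos[of "b + 1" "Suc n"] by (auto simp: add_pos_nonneg)
  ultimately show ?thesis
    by (simp add: frac_eq_eq)
qed

definition pronic :: "real \<Rightarrow> real" where
  "pronic y = y * (y + 1)"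

lemma pronic_inj_nonneg: "0 \<le> y \<Longrightarrow> 0 \<le> z \<Longrightarrow> pronic y = pronic z \<Longrightarrow> y = z"
proof (rule ccontr)
  assume "0 \<le> y" "0 \<le> z" "pronic y = pronic z" "y \<noteq> z"
  moreover have "pronic y - pronic z = (y - z) * (y + z + 1)"
    by (simp add: pronic_def algebra_simps)
  ultimately show False
    by simp
qed

(* tau m vanishes at pronic 0, ..., pronic (m - 1), the last m nodes. *)
definition tau :: "nat \<Rightarrow> real poly" where
  "tau m = (\<Prod>j<m. [:- pronic (real j), 1:])"

lemma tau_0 [simp]: "tau 0 = 1"
  by (simp add: tau_def)

lemma tau_Suc: "tau (Suc m) = tau m * [:- pronic (real m), 1:]"
  by (simp add: tau_def)

lemma degree_tau: "degree (tau m) = m"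
  and coeff_tau: "coeff (tau m) m = 1"
proof (induction m)
  case (Suc m)
  then have "tau m \<noteq> 0" by auto
  then show degree: "degree (tau (Suc m)) = Suc m"
    using Suc by (simp only: tau_Suc, subst degree_mult_eq) auto
  have "lead_coeff (tau (Suc m)) = 1"
    using Suc by (simp add: tau_Suc lead_coeff_mult del: mult_pCons_right)
  then show "coeff (tau (Suc m)) (Suc m) = 1"
    by (simp only: degree)
qed simp_all

lemma poly_tau_Suc: "poly (tau (Suc m)) z = poly (tau m) z * (z - pronic (real m))"
  by (simp add: tau_Suc algebra_simps)

lemma poly_tau_pronic_Suc:
  "poly (tau (Suc m)) (pronic y) = poly (tau m) (pronic y) * ((y - real m) * (y + real m + 1))"
  by (simp add: poly_tau_Suc pronic_def algebra_simps)

lemma poly_tau_pronic_up: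
  "poly (tau (Suc m)) (pronic (y + 1)) = poly (tau m) (pronic y) * ((y + real m + 1) * (y + real m + 2))"
proof (induction m)
  case (Suc m)
  have "poly (tau (Suc (Suc m))) (pronic (y + 1))
      = poly (tau m) (pronic y) * ((y + real m + 1) * (y + real m + 2))
        * (pronic (y + 1) - pronic (real (Suc m)))"
    by (subst poly_tau_Suc) (simp only: Suc.IH)
  also have "\<dots> = poly (tau m) (pronic y) * ((y - real m) * (y + real m + 1))
        * ((y + real (Suc m) + 1) * (y + real (Suc m) + 2))"
    by (simp add: pronic_def algebra_simps)
  finally show ?case
    by (simp only: poly_tau_pronic_Suc)
qed (simp add: poly_tau_Suc pronic_def algebra_simps)

lemma poly_tau_pronic_down:
  "poly (tau (Suc m)) (pronic (y - 1)) = poly (tau m) (pronic y) * ((y - real m) * (y - real m - 1))"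
proof (induction m)
  case (Suc m)
  have "poly (tau (Suc (Suc m))) (pronic (y - 1))
      = poly (tau m) (pronic y) * ((y - real m) * (y - real m - 1))
        * (pronic (y - 1) - pronic (real (Suc m)))"
    by (subst poly_tau_Suc) (simp only: Suc.IH)
  also have "\<dots> = poly (tau m) (pronic y) * ((y - real m) * (y + real m + 1))
        * ((y - real (Suc m)) * (y - real (Suc m) - 1))"
    by (simp add: pronic_def algebra_simps)
  finally show ?case
    by (simp only: poly_tau_pronic_Suc)
qed (simp add: poly_tau_Suc pronic_def algebra_simps)

locale dual_hahn_opposite =
  fixes d :: nat and r s :: real
  assumes r_gt: "-1 < r" and s_gt: "-1 < s" and r_plus_s: "r + s = 0"
begin

lemma theta_eq_pronic: "theta d r s i = pronic (real (d - i))"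
  using r_plus_s by (simp add: theta_def pronic_def)

lemma inj_theta: "inj_on (theta d r s) {..d}"
proof (rule inj_onI)
  fix i j assume "i \<in> {..d}" "j \<in> {..d}" and eq: "theta d r s i = theta d r s j"
  have "real (d - i) = real (d - j)"
    by (rule pronic_inj_nonneg) (use eq in \<open>simp_all add: theta_eq_pronic\<close>)
  then show "i = j"
    using \<open>i \<in> {..d}\<close> \<open>j \<in> {..d}\<close> by simp
qed

definition b_closed :: "real \<Rightarrow> real" where
  "b_closed y = (r - y) * (y + real d + 1) / (2 * (2 * y + 1))"

definition c_closed :: "real \<Rightarrow> real" where
  "c_closed y = (real d - y) * (- y - r - 1) / (2 * (2 * y + 1))"

lemma bs_eq:
  assumes "i < d"
  shows "bs d r s i = b_closed (real (d - i))"
proof -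
  define y where "y = real (d - i)"
  have y: "y = real d - real i" "1 \<le> y"
    using assms by (auto simp: y_def)
  have args: "2 * real d - 2 * real i + r + s + 2 = 2 * y + 2"
    "2 * real d - 2 * real i + r + s = 2 * y" "real i - real d - s = r - y"
    using y r_plus_s by simp_all
  have "bs d r s i = y * (r - y) * (pochhammer (2 * y + 2) i / pochhammer (2 * y) (Suc i))"
    unfolding bs_def if_P[OF assms] args y_def[symmetric] by simp
  also have "\<dots> = y * (r - y) * ((2 * y + real i + 1) / (2 * y * (2 * y + 1)))"
    using y by (simp add: pochhammer_add2_div_Suc)
  also have "\<dots> = y * (r - y) * ((y + real d + 1) / (2 * y * (2 * y + 1)))"
    using y by simp
  also have "\<dots> = b_closed y"
  proof -
    have ne: "2 * y * (2 * y + 1) \<noteq> 0" "2 * (2 * y + 1) \<noteq> 0"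
      using y by auto
    show ?thesis
      unfolding b_closed_def times_divide_eq_right frac_eq_eq[OF ne] by (simp add: algebra_simps)
  qed
  finally show ?thesis
    by (simp add: y_def)
qed

lemma cs_eq:
  assumes "i \<le> d"
  shows "cs d r s i = c_closed (real (d - i))"
proof (cases "i = 0")
  case False
  define n where "n = d - i"
  have i: "real i = real d - real n"
    using assms by (simp add: n_def)
  have args: "real d - real i + r + s + 1 = real n + 1" "real d - real i + r + s + 2 = real n + 1 + 1"
    "d - i + 1 = Suc n"
    using assms r_plus_s by (simp_all add: n_def)
  have "cs d r s i = real i * (real i - real d - r - 1)
      * (pochhammer (real n + 1) n / pochhammer (real n + 1 + 1) (Suc n))"
    using assms False unfolding cs_def args by (simp add: n_def)
  also have "\<dots> = real i * (real i - real d - r - 1)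
      * ((real n + 1) / ((real n + 1 + real n) * (real n + 1 + real n + 1)))"
    by (simp only: pochhammer_div_add1_Suc[of "real n + 1" n] of_nat_less_0_iff add_nonneg_pos)
  also have "\<dots> = real i * (real i - real d - r - 1) / (2 * (2 * real n + 1))"
  proof -
    have ne: "(real n + 1 + real n) * (real n + 1 + real n + 1) \<noteq> 0" "2 * (2 * real n + 1) \<noteq> 0"
      by (simp_all add: add_nonneg_pos)
    show ?thesis
      unfolding times_divide_eq_right frac_eq_eq[OF ne] by (simp add: algebra_simps)
  qed
  also have "\<dots> = c_closed (real n)"
    unfolding c_closed_def i by simp
  finally show ?thesis
    by (simp add: n_def)
qed (simp add: cs_def c_closed_def)

lemma b_closed_plus_c_closed:
  assumes "0 \<le> y"
  shows "b_closed y + c_closed y = (r - real d) / 2"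
proof -
  have ne: "2 * (2 * y + 1) \<noteq> 0" "(2::real) \<noteq> 0"
    using assms by simp_all
  have "b_closed y + c_closed y = ((r - y) * (y + real d + 1) + (real d - y) * (- y - r - 1)) / (2 * (2 * y + 1))"
    by (simp add: b_closed_def c_closed_def add_divide_distrib)
  also have "\<dots> = (r - real d) / 2"
    unfolding frac_eq_eq[OF ne] by (simp add: algebra_simps)
  finally show ?thesis .
qed

lemma as_eq:
  assumes "i < d"
  shows "as d r s i = (real d - r) / 2"
  using assms b_closed_plus_c_closed[of "real (d - i)"]
  by (simp add: as_def thetas_def bs_eq cs_eq)

lemma bs_neg:
  assumes "i < d"
  shows "bs d r s i < 0"
proof -
  have "r < 1"
    using s_gt r_plus_s by simp
  then have "(r - real (d - i)) * (real (d - i) + real d + 1) < 0"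
    using assms by (intro mult_neg_pos) auto
  moreover have "0 < 2 * (2 * real (d - i) + 1)"
    by simp
  ultimately show ?thesis
    unfolding bs_eq[OF assms] b_closed_def by (rule divide_neg_pos)
qed

lemma cs_neg:
  assumes "0 < i" "i \<le> d"
  shows "cs d r s i < 0"
proof -
  have "(real d - real (d - i)) * (- real (d - i) - r - 1) < 0"
    using assms r_gt by (intro mult_pos_neg) (auto simp: of_nat_diff)
  moreover have "0 < 2 * (2 * real (d - i) + 1)"
    by simp
  ultimately show ?thesis
    unfolding cs_eq[OF assms(2)] c_closed_def by (rule divide_neg_pos)
qed

definition tau_lower :: "nat \<Rightarrow> real" where
  "tau_lower k = (real d - real k) * (- real k - r - 1) * (real k + 1)"

lemma b_closed_c_closed_tau:
  assumes "0 \<le> y"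
  shows "b_closed y * ((y - real k) * (y - real k - 1)) + c_closed y * ((y + real k + 1) * (y + real k + 2))
    = (real (Suc k) + (r - real d) / 2) * ((y - real k) * (y + real k + 1)) + tau_lower k"
proof -
  define D where "D = 2 * (2 * y + 1)"
  have "D \<noteq> 0"
    using assms by (simp add: D_def)
  then have b: "b_closed y * D = (r - y) * (y + real d + 1)"
    and c: "c_closed y * D = (real d - y) * (- y - r - 1)"
    by (simp_all add: b_closed_def c_closed_def D_def)
  have "D * (b_closed y * ((y - real k) * (y - real k - 1)) + c_closed y * ((y + real k + 1) * (y + real k + 2)))
      = (b_closed y * D) * ((y - real k) * (y - real k - 1))
        + (c_closed y * D) * ((y + real k + 1) * (y + real k + 2))"
    by (simp add: algebra_simps)
  also have "\<dots> = D * ((real (Suc k) + (r - real d) / 2) * ((y - real k) * (y + real k + 1)) + tau_lower k)"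
    unfolding b c by (simp add: D_def tau_lower_def field_simps)
  finally show ?thesis
    using \<open>D \<noteq> 0\<close> by simp
qed

primrec weight :: "nat \<Rightarrow> real" where
  "weight 0 = 1"
| "weight (Suc i) = weight i * bs d r s i / cs d r s (Suc i)"

lemma weight_pos: "i \<le> d \<Longrightarrow> 0 < weight i"
proof (induction i)
  case (Suc i)
  then have "bs d r s i < 0" "cs d r s (Suc i) < 0" "0 < weight i"
    by (simp_all add: bs_neg cs_neg)
  then show ?case
    by (simp add: mult_pos_neg divide_neg_neg)
qed simp

lemma weight_balance: "i < d \<Longrightarrow> weight i * bs d r s i = weight (Suc i) * cs d r s (Suc i)"
  using cs_neg[of "Suc i"] by simp

sublocale nodes: weighted_nodes d "theta d r s" weight
  by unfold_locales (simp_all add: inj_theta weight_pos)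

definition shifted_Ls :: "real poly \<Rightarrow> real poly" where
  "shifted_Ls f = opLs d r s f + smult ((r - real d) / 2) f"

lemma opL_eq_mult_nodes: "opL d r s = nodes.mult_nodes"
  unfolding opL_def nodes.mult_nodes_def by (rule ext) (rule nodes.the_interp)

lemma opLs_eq_interp: "opLs d r s f = nodes.interp (nodes.tridiag_value (bs d r s) (as d r s) (cs d r s) f)"
  unfolding opLs_def nodes.tridiag_value_def by (rule nodes.the_interp)

lemma degree_dual_op: "degree f \<le> d \<Longrightarrow> degree (shifted_Ls f) \<le> d"
  by (simp add: shifted_Ls_def opLs_eq_interp nodes.degree_interp degree_add_le order.trans[OF degree_smult_le])

lemma poly_dual_op:
  "i \<le> d \<Longrightarrow> poly (shifted_Ls f) (theta d r s i)
    = nodes.tridiag_value (bs d r s) (\<lambda>i. as d r s i + (r - real d) / 2) (cs d r s) f i"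
  by (simp add: shifted_Ls_def opLs_eq_interp nodes.poly_interp nodes.tridiag_value_def algebra_simps)

lemma shifted_Ls_add: "shifted_Ls (f + g) = shifted_Ls f + shifted_Ls g"
  by (simp add: shifted_Ls_def opLs_eq_interp nodes.tridiag_value_add nodes.interp_add smult_add_right)

lemma shifted_Ls_smult: "shifted_Ls (smult c f) = smult c (shifted_Ls f)"
  by (simp add: shifted_Ls_def opLs_eq_interp nodes.tridiag_value_smult nodes.interp_smult poly_eq_iff algebra_simps)

lemma lin_map_on_dual_op: "lin_map_on (Pd d) shifted_Ls"
  unfolding lin_map_on_def Pd_def
  using degree_dual_op shifted_Ls_add shifted_Ls_smult by blast

lemma shifted_Ls_diagonal: "i < d \<Longrightarrow> as d r s i + (r - real d) / 2 = 0"
  by (simp add: as_eq add_divide_distrib[symmetric])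

(* At i = d the missing b-term is absorbed by pronic (-1) = pronic 0
   and b_closed 0 = a*_d - (d - r)/2. *)
lemma poly_dual_op_pronic:
  assumes "i \<le> d"
  shows "poly (shifted_Ls f) (theta d r s i) = b_closed (real (d - i)) * poly f (pronic (real (d - i) - 1))
    + c_closed (real (d - i)) * poly f (pronic (real (d - i) + 1))"
proof (cases "i < d")
  case True
  have up: "theta d r s (Suc i) = pronic (real (d - i) - 1)"
    using True by (simp add: theta_eq_pronic of_nat_diff algebra_simps)
  have down: "0 < i \<Longrightarrow> theta d r s (i - Suc 0) = pronic (real (d - i) + 1)"
    using assms by (simp add: theta_eq_pronic of_nat_diff algebra_simps)
  have "c_closed (real d) = 0"
    by (simp add: c_closed_def)
  then show ?thesis
    using assms True
    by (auto simp: poly_dual_op nodes.tridiag_value_def shifted_Ls_diagonal bs_eq cs_eq up down)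
next
  case False
  then have "i = d"
    using assms by simp
  have "as d r s d = - c_closed 0"
    by (simp add: as_def thetas_def bs_def cs_eq)
  then have diag: "as d r s d + (r - real d) / 2 = b_closed 0"
    using b_closed_plus_c_closed[of 0] by linarith
  have "poly (shifted_Ls f) (theta d r s d)
      = nodes.tridiag_value (bs d r s) (\<lambda>i. as d r s i + (r - real d) / 2) (cs d r s) f d"
    by (rule poly_dual_op) simp
  also have "\<dots> = b_closed 0 * poly f (pronic 0) + c_closed 0 * poly f (pronic 1)"
  proof (cases "0 < d")
    case True
    then have "theta d r s (d - 1) = pronic 1"
      by (simp add: theta_eq_pronic)
    then show ?thesis
      using True by (simp add: nodes.tridiag_value_def diag theta_eq_pronic cs_eq)
  next
    case False
    have "c_closed 0 = 0"
      unfolding c_closed_def using False by simp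
    then show ?thesis
      unfolding nodes.tridiag_value_def if_not_P[OF less_irrefl] if_not_P[OF False] diag theta_eq_pronic
      by simp
  qed
  finally show ?thesis
    using \<open>i = d\<close> by (simp add: pronic_def)
qed

lemma shifted_Ls_one: "shifted_Ls 1 = smult ((r - real d) / 2) 1"
proof (rule nodes.poly_eq_on_nodes)
  show "degree (shifted_Ls 1) \<le> d"
    by (simp add: degree_dual_op)
  show "poly (shifted_Ls 1) (theta d r s i) = poly (smult ((r - real d) / 2) 1) (theta d r s i)"
    if "i \<le> d" for i
    using that by (simp add: poly_dual_op_pronic b_closed_plus_c_closed distrib_left[symmetric])
qed simp

lemma shifted_Ls_tau_Suc:
  assumes "Suc k \<le> d"
  shows "shifted_Ls (tau (Suc k))
    = smult (real (Suc k) + (r - real d) / 2) (tau (Suc k)) + smult (tau_lower k) (tau k)"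
proof (rule nodes.poly_eq_on_nodes)
  show "degree (shifted_Ls (tau (Suc k))) \<le> d"
    using assms by (simp add: degree_dual_op degree_tau)
  show "degree (smult (real (Suc k) + (r - real d) / 2) (tau (Suc k)) + smult (tau_lower k) (tau k)) \<le> d"
    using assms by (intro degree_add_le) (simp_all add: order.trans[OF degree_smult_le] degree_tau)
  fix i assume "i \<le> d"
  define y where "y = real (d - i)"
  have "poly (shifted_Ls (tau (Suc k))) (theta d r s i)
      = poly (tau k) (pronic y) * (b_closed y * ((y - real k) * (y - real k - 1))
        + c_closed y * ((y + real k + 1) * (y + real k + 2)))"
    unfolding y_def poly_dual_op_pronic[OF \<open>i \<le> d\<close>] poly_tau_pronic_up poly_tau_pronic_down
    by (simp add: algebra_simps)
  also have "\<dots> = poly (tau k) (pronic y)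
      * ((real (Suc k) + (r - real d) / 2) * ((y - real k) * (y + real k + 1)) + tau_lower k)"
    by (simp add: b_closed_c_closed_tau y_def)
  also have "\<dots> = poly (smult (real (Suc k) + (r - real d) / 2) (tau (Suc k)) + smult (tau_lower k) (tau k))
      (theta d r s i)"
    by (simp add: theta_eq_pronic poly_tau_pronic_Suc y_def field_simps)
  finally show "poly (shifted_Ls (tau (Suc k))) (theta d r s i) = \<dots>" .
qed

lemma shifted_Ls_tau_triangular:
  "k \<le> d \<Longrightarrow> deg_below k (shifted_Ls (tau k) - smult (real k + (r - real d) / 2) (tau k))"
proof (cases k)
  case 0
  then show ?thesis
    by (simp add: shifted_Ls_one deg_below_0_iff)
next
  case (Suc m)
  moreover assume "k \<le> d"
  ultimately show ?thesis
    by (simp add: shifted_Ls_tau_Suc deg_below_Suc_iff degree_tau)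
qed

sublocale tri: triangular_operator d shifted_Ls tau "\<lambda>k. real k + (r - real d) / 2"
  by unfold_locales
    (simp_all add: shifted_Ls_add shifted_Ls_smult degree_tau coeff_tau shifted_Ls_tau_triangular inj_on_def)

sublocale eig: selfadjoint_eigenbasis d "theta d r s" weight shifted_Ls "\<lambda>k. real k + (r - real d) / 2"
proof unfold_locales
  show "nodes.ip (shifted_Ls f) g = nodes.ip f (shifted_Ls g)" for f g
    by (rule nodes.ip_tridiag_commute[OF weight_balance poly_dual_op])
  show "inj_on (\<lambda>k. real k + (r - real d) / 2) {..d}"
    by (rule inj_onI) simp
qed (rule tri.monic_eigenvector)

lemma lin_map_on_opL: "lin_map_on (Pd d) (opL d r s)"
  unfolding opL_eq_mult_nodes by (rule nodes.lin_map_on_mult_nodes)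

lemma matrix_opL_lagrange:
  "matrix_in_basis (Suc d) nodes.lagrange (opL d r s) (\<lambda>i j. if i = j then theta d r s j else 0)"
  unfolding opL_eq_mult_nodes
  by (rule nodes.matrix_in_lagrange_basis)
     (simp_all add: nodes.degree_mult_nodes nodes.poly_mult_nodes nodes.poly_lagrange)

abbreviation shifted_Ls_jacobi :: "nat \<Rightarrow> nat \<Rightarrow> real" where
  "shifted_Ls_jacobi \<equiv> jacobi_matrix (bs d r s) (\<lambda>i. as d r s i + (r - real d) / 2) (cs d r s)"

lemma matrix_dual_op_lagrange: "matrix_in_basis (Suc d) nodes.lagrange shifted_Ls shifted_Ls_jacobi"
  by (rule nodes.matrix_in_lagrange_basis)
     (simp_all add: degree_dual_op nodes.degree_lagrange poly_dual_op nodes.tridiag_value_lagrange)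

lemma irred_tridiagonal_dual_op_jacobi: "irred_tridiagonal (Suc d) shifted_Ls_jacobi"
  by (rule irred_tridiagonal_jacobi_matrix) (simp_all add: bs_neg[THEN less_imp_neq] cs_neg[THEN less_imp_neq])

lemma shifted_Ls_jacobi_diagonal: "i + 1 < Suc d \<Longrightarrow> shifted_Ls_jacobi i i = 0"
  by (simp add: jacobi_matrix_def shifted_Ls_diagonal)

lemma matrix_opL_eigenbasis:
  "matrix_in_basis (Suc d) eig.eigenpoly (opL d r s)
    (\<lambda>i j. nodes.ip (nodes.mult_nodes (eig.eigenpoly j)) (eig.eigenpoly i)
      / nodes.ip (eig.eigenpoly i) (eig.eigenpoly i))"
  unfolding opL_eq_mult_nodes by (rule eig.matrix_in_eigenbasis) (rule nodes.degree_mult_nodes)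

end

theorem corollary4p1:
  fixes d :: nat and r s :: real
  assumes "r > -1" and "s > -1" and "r \<noteq> 0" and "r + s = 0"
  shows "leonard_pair (Pd d) (opL d r s) (\<lambda>f. opLs d r s f + smult ((r - real d) / 2) f)
       \<and> dual_almost_bipartite (Pd d) (opL d r s) (\<lambda>f. opLs d r s f + smult ((r - real d) / 2) f)"
proof -
  interpret dual_hahn_opposite d r s
    using assms by unfold_locales auto
  have shifted_Ls_eq: "(\<lambda>f. opLs d r s f + smult ((r - real d) / 2) f) = shifted_Ls"
    by (simp add: fun_eq_iff shifted_Ls_def)
  show ?thesis
    unfolding shifted_Ls_eq dual_almost_bipartite_def almost_bipartite_def leonard_pair_def
    using lin_space_Pd Pd_neq_zero lin_map_on_opL lin_map_on_dual_op
      is_diagonal_if_eq[of "Suc d" "theta d r s"]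
      is_diagonal_if_eq[of "Suc d" "\<lambda>j. real j + (r - real d) / 2"]
      nodes.lagrange_basis matrix_opL_lagrange matrix_dual_op_lagrange
      irred_tridiagonal_dual_op_jacobi shifted_Ls_jacobi_diagonal
      eig.eigenpoly_basis matrix_opL_eigenbasis eig.matrix_A_eigenbasis
      eig.irred_tridiagonal_mult_nodes_eigenbasis
    by blast
qed

end
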